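(* Let $\underline{t}$ be an increment array of size $s$ for $n$ agents, let $y\in\{1,\ldots,n\}$, and write $C=C(y,\underline{t})=\{x_1,x_2,\ldots,x_s\}$ with $x_1<x_2<\cdots<x_s$. Then there is an increment array $\underline{u}=\langle u_0,\ldots,u_{s-1}\rangle$ with $\underline{t}\approx\underline{u}$ such that $C(x_1,\underline{u})=C$ and $C(x_1,\underline{u})$ generates the elements of $C$ in strictly increasing order, i.e. \[x_i\in\Big\{x_1+\sum_{k=0}^{i-2}u_k+i-1,\; x_1+\sum_{k=0}^{i-2}u_k+i-1-n\Big\}\quad\text{for all }2\le i\le s.\]
   Context: Agent identifiers are $\{1,\ldots,n\}$, arithmetic on identifiers is modulo $n$ with representatives in $\{1,\ldots,n\}$ (a value $0$ is replaced by $n$). An increment array (IA) of size $s$ ($1\le s\le n$) for $n$ agents is a tuple $\underline{t}=\langle t_0,\ldots,t_{s-1}\rangle$ of non-negative integers with $\sum t_i=n-s$. Cumulative increments: $\varphi_1=0$, $\varphi_i=\sum_{k=0}^{i-2}(t_k+1)$ for $2\le i\le s+1$. The coalition generated from $x$ is $C(x,\underline{t})=\{x\}\cup\bigcup_{i=2}^{s}\{(x+\varphi_i)\bmod n\}$ (residues in $\{1,\ldots,n\}$). Two IAs of the same size are equivalent, $\underline{t}\approx\underline{u}$, if $\underline{u}$ is a circular shift of $\underline{t}$: there is $0\le k\le s-1$ with $\langle u_0,\ldots,u_{s-1}\rangle=\langle t_k,\ldots,t_{s-1},t_0,\ldots,t_{k-1}\rangle$. *)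

theory Defs
  imports Main
begin

definition modn :: "nat \<Rightarrow> nat \<Rightarrow> nat" where
  "modn n a = (if a mod n = 0 then n else a mod n)"

definition is_IA :: "nat \<Rightarrow> nat \<Rightarrow> nat list \<Rightarrow> bool" where
  "is_IA n s t \<longleftrightarrow> 1 \<le> s \<and> s \<le> n \<and> length t = s \<and> sum_list t = n - s"

definition phi :: "nat list \<Rightarrow> nat \<Rightarrow> nat" where
  "phi t i = (\<Sum>k<i - 1. t ! k + 1)"

definition coal :: "nat \<Rightarrow> nat \<Rightarrow> nat list \<Rightarrow> nat set" where
  "coal n x t = {x} \<union> (\<lambda>i. modn n (x + phi t i)) ` {2..length t}"

definition ia_equiv :: "nat list \<Rightarrow> nat list \<Rightarrow> bool" where
  "ia_equiv t u \<longleftrightarrow> length u = length t \<and> (\<exists>k. k \<le> length t - 1 \<and> u = drop k t @ take k t)"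

end

theory Submission
  imports Defs
begin

text \<open>
  Write \<open>\<sigma>\<^sub>t(m) = \<Sum>\<^sub>j\<^sub><\<^sub>m (t\<^sub>j + 1)\<close>, so that
  \<open>C(x, t) = {x + \<sigma>\<^sub>t(m) mod n | m < s}\<close> and \<open>\<sigma>\<^sub>t(s) = n\<close>.
  Rotating \<open>t\<close> left by \<open>k\<close> and starting at \<open>x + \<sigma>\<^sub>t(k)\<close> walks around
  the same cycle of residues, so it generates the same coalition; choose \<open>k\<close> so that this
  starting point is the least element \<open>x\<^sub>1\<close>.  Since \<open>\<sigma>\<close> increases strictly
  and stays below \<open>n\<close>, a wrap-around \<open>x\<^sub>1 + \<sigma>(m) > n\<close> would produce the element
  \<open>x\<^sub>1 + \<sigma>(m) - n < x\<^sub>1\<close>; hence there is none, and the rotated array lists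
  \<open>C\<close> in increasing order.
\<close>

definition incr_sum :: "nat list \<Rightarrow> nat \<Rightarrow> nat" where
  "incr_sum t m = (\<Sum>j<m. t ! j + 1)"

lemma incr_sum_0 [simp]: "incr_sum t 0 = 0"
  by (simp add: incr_sum_def)

lemma incr_sum_Suc: "incr_sum t (Suc m) = incr_sum t m + t ! m + 1"
  by (simp add: incr_sum_def)

lemma phi_eq_incr_sum: "phi t i = incr_sum t (i - 1)"
  by (simp add: phi_def incr_sum_def)

lemma incr_sum_length: "incr_sum t (length t) = sum_list t + length t"
  unfolding incr_sum_def sum.distrib by (simp add: sum_list_sum_nth atLeast0LessThan)

lemma int_incr_sum: "int (incr_sum t m) = (\<Sum>j<m. int (t ! j)) + int m"
  by (simp add: incr_sum_def sum.distrib)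

lemma incr_sum_strict_mono: "strict_mono (incr_sum t)"
  unfolding strict_mono_Suc_iff by (simp add: incr_sum_Suc)

lemma incr_sum_rotate:
  assumes "k < length t" "m \<le> length t"
  shows "incr_sum t k + incr_sum (rotate k t) m =
    (if k + m \<le> length t then incr_sum t (k + m)
     else incr_sum t (length t) + incr_sum t (k + m - length t))"
  using assms(2)
proof (induction m)
  case 0
  then show ?case using assms(1) by simp
next
  case (Suc m)
  let ?s = "length t"
  have m: "m < ?s" using Suc.prems by simp
  have IH: "incr_sum t k + incr_sum (rotate k t) m =
      (if k + m \<le> ?s then incr_sum t (k + m) else incr_sum t ?s + incr_sum t (k + m - ?s))"
    using Suc m by simp
  have rot: "rotate k t ! m = t ! ((k + m) mod ?s)"
    using nth_rotate[OF m, of k] by (simp add: add.commute)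
  show ?case
  proof (cases "k + m \<le> ?s")
    case True
    then show ?thesis using IH rot by (cases "k + m = ?s") (simp_all add: incr_sum_Suc)
  next
    case False
    then have "(k + m) mod ?s = k + m - ?s" using m assms(1) by (simp add: le_mod_geq)
    moreover have "k + Suc m - ?s = Suc (k + m - ?s)" using False by simp
    ultimately show ?thesis using IH False rot by (simp add: incr_sum_Suc)
  qed
qed

lemma incr_sum_rotate_mod:
  assumes "k < length t" "m < length t"
  shows "(incr_sum t k + incr_sum (rotate k t) m) mod incr_sum t (length t) =
    incr_sum t ((k + m) mod length t) mod incr_sum t (length t)"
proof (cases "k + m < length t")
  case True
  then show ?thesis using incr_sum_rotate[OF assms(1)] assms(2) by simp
next
  case False
  then have "(k + m) mod length t = k + m - length t" using assms by (simp add: le_mod_geq)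
  then show ?thesis using incr_sum_rotate[OF assms(1)] assms(2) False
    by (cases "k + m = length t") simp_all
qed

lemma image_add_mod_lessThan:
  fixes k s :: nat
  assumes "k < s"
  shows "(\<lambda>m. (k + m) mod s) ` {..<s} = {..<s}"
proof
  have "0 < s" using assms by simp
  then show "(\<lambda>m. (k + m) mod s) ` {..<s} \<subseteq> {..<s}" by auto
next
  show "{..<s} \<subseteq> (\<lambda>m. (k + m) mod s) ` {..<s}"
  proof
    fix j assume j: "j \<in> {..<s}"
    have "(k + (j + s - k) mod s) mod s = (k + (j + s - k)) mod s" by (simp add: mod_add_right_eq)
    also have "\<dots> = j" using j assms by simp
    finally show "j \<in> (\<lambda>m. (k + m) mod s) ` {..<s}"
      using assms by (intro image_eqI[where x="(j + s - k) mod s"]) auto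
  qed
qed

lemma modn_eq_iff: "0 < n \<Longrightarrow> modn n a = modn n b \<longleftrightarrow> a mod n = b mod n"
  unfolding modn_def by (metis mod_less_divisor less_irrefl)

lemma modn_in_range: "0 < n \<Longrightarrow> modn n a \<in> {1..n}"
  unfolding modn_def by (auto simp: less_imp_le)

lemma modn_eq_self: "a \<in> {1..n} \<Longrightarrow> modn n a = a"
  unfolding modn_def by (cases "a = n") auto

lemma modn_eq_diff: "n < a \<Longrightarrow> a < 2 * n \<Longrightarrow> modn n a = a - n"
  unfolding modn_def by (simp add: le_mod_geq)

lemma is_IA_incr_sum_length: "is_IA n s t \<Longrightarrow> incr_sum t s = n"
  unfolding is_IA_def using incr_sum_length[of t] by auto

lemma is_IA_rotate: "is_IA n s t \<Longrightarrow> is_IA n s (rotate k t)"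
  unfolding is_IA_def
  by (metis length_rotate rotate_drop_take append_take_drop_id sum_list_append add.commute)

lemma ia_equiv_rotate: "k < length t \<Longrightarrow> ia_equiv t (rotate k t)"
  unfolding ia_equiv_def by (auto simp: rotate_drop_take intro!: exI[of _ k])

lemma coal_eq_image:
  assumes "x \<in> {1..n}" "t \<noteq> []"
  shows "coal n x t = (\<lambda>m. modn n (x + incr_sum t m)) ` {..<length t}"
proof -
  have "{..<length t} = insert 0 ((\<lambda>i. i - 1) ` {2..length t})"
  proof (rule set_eqI)
    fix m
    show "m \<in> {..<length t} \<longleftrightarrow> m \<in> insert 0 ((\<lambda>i. i - 1) ` {2..length t})"
      using assms(2) by (cases m) (auto intro!: image_eqI[where x="m + 1"])
  qed
  then show ?thesis
    using modn_eq_self[OF assms(1)] by (simp add: coal_def phi_eq_incr_sum image_image)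
qed

lemma coal_rotate:
  assumes "is_IA n s t" "y \<in> {1..n}" "k < s"
  shows "coal n (modn n (y + incr_sum t k)) (rotate k t) = coal n y t"
proof -
  have len: "length t = s" "t \<noteq> []" and n: "0 < n" and total: "incr_sum t s = n"
    using assms(1,3) is_IA_incr_sum_length by (auto simp: is_IA_def)
  let ?x = "modn n (y + incr_sum t k)"
  have x: "?x \<in> {1..n}" using modn_in_range[OF n] .
  have shift: "modn n (?x + incr_sum (rotate k t) m) = modn n (y + incr_sum t ((k + m) mod s))"
    if "m < s" for m
  proof -
    have "?x mod n = (y + incr_sum t k) mod n"
      using modn_eq_iff[OF n] modn_eq_self[OF x] by metis
    then have "(?x + incr_sum (rotate k t) m) mod n
        = (y + (incr_sum t k + incr_sum (rotate k t) m) mod n) mod n"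
      by (metis add.assoc mod_add_left_eq mod_add_right_eq)
    also have "\<dots> = (y + incr_sum t ((k + m) mod s)) mod n"
      using incr_sum_rotate_mod[of k t m] assms(3) that len total by (simp add: mod_add_right_eq)
    finally show ?thesis using modn_eq_iff[OF n] by blast
  qed
  have "coal n ?x (rotate k t) = (\<lambda>m. modn n (y + incr_sum t ((k + m) mod s))) ` {..<s}"
    using coal_eq_image[OF x] len shift by simp
  also have "\<dots> = (\<lambda>j. modn n (y + incr_sum t j)) ` (\<lambda>m. (k + m) mod s) ` {..<s}"
    by (simp add: image_image)
  also have "\<dots> = coal n y t"
    using image_add_mod_lessThan[OF assms(3)] coal_eq_image[OF assms(2)] len by simp
  finally show ?thesis .
qed

lemma coal_no_wrap_from_Min:
  assumes "is_IA n s t" "x \<in> {1..n}" "x = Min (coal n x t)"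
  shows "coal n x t = (\<lambda>m. x + incr_sum t m) ` {..<s}"
proof -
  have len: "length t = s" "t \<noteq> []" and total: "incr_sum t s = n"
    using assms(1) is_IA_incr_sum_length by (auto simp: is_IA_def)
  have C: "coal n x t = (\<lambda>m. modn n (x + incr_sum t m)) ` {..<s}"
    using coal_eq_image[OF assms(2)] len by simp
  have no_wrap: "x + incr_sum t m \<le> n" if "m < s" for m
  proof (rule ccontr)
    assume wrap: "\<not> x + incr_sum t m \<le> n"
    have small: "incr_sum t m < n"
      using strict_monoD[OF incr_sum_strict_mono[of t] that] total by simp
    have "modn n (x + incr_sum t m) \<in> coal n x t" using C that by blast
    then have "x \<le> modn n (x + incr_sum t m)"
      using assms(3) C by (metis Min_le finite_imageI finite_lessThan)
    also have "\<dots> = x + incr_sum t m - n"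
      using wrap small assms(2) by (intro modn_eq_diff) auto
    finally show False using wrap small by linarith
  qed
  show ?thesis
    using C no_wrap assms(2) by (auto intro!: image_cong modn_eq_self)
qed

lemma sorted_list_of_set_image_strict_mono:
  fixes f :: "nat \<Rightarrow> 'a::linorder"
  assumes "strict_mono f"
  shows "sorted_list_of_set (f ` {..<s}) = map f [0..<s]"
proof -
  have "sorted_wrt (<) (map f [0..<s])"
    using assms by (auto simp: sorted_wrt_iff_nth_less strict_mono_def)
  then have "sorted (map f [0..<s])" "distinct (map f [0..<s])"
    by (simp_all add: strict_sorted_iff)
  moreover have "f ` {..<s} = set (map f [0..<s])" by auto
  ultimately show ?thesis by (metis sorted_list_of_set.idem_if_sorted_distinct)
qed

theorem lemma4:
  fixes n s y :: nat and t :: "nat list"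
  assumes "is_IA n s t" and "y \<in> {1..n}"
  defines "xs \<equiv> sorted_list_of_set (coal n y t)"
  shows "\<exists>u. is_IA n s u \<and> ia_equiv t u \<and> coal n (xs ! 0) u = coal n y t \<and>
           (\<forall>i\<in>{2..s}. int (xs ! (i - 1)) \<in>
              {int (xs ! 0) + (\<Sum>k<i - 1. int (u ! k)) + int i - 1,
               int (xs ! 0) + (\<Sum>k<i - 1. int (u ! k)) + int i - 1 - int n})"
proof -
  have s: "0 < s" "length t = s" and n: "0 < n" using assms(1) by (auto simp: is_IA_def)
  have C: "coal n y t = (\<lambda>m. modn n (y + incr_sum t m)) ` {..<s}"
    using coal_eq_image[OF assms(2)] s by auto
  define x1 where "x1 = Min (coal n y t)"
  have "x1 \<in> coal n y t"
    unfolding x1_def using s by (intro Min_in) (auto simp: C)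
  then obtain k where k: "k < s" and x1: "x1 = modn n (y + incr_sum t k)"
    unfolding C by blast
  define u where "u = rotate k t"
  have Cu: "coal n x1 u = coal n y t"
    unfolding u_def x1 using coal_rotate[OF assms(1,2) k] .
  have "x1 \<in> {1..n}"
    unfolding x1 using modn_in_range[OF n] .
  then have "coal n y t = (\<lambda>m. x1 + incr_sum u m) ` {..<s}"
    using coal_no_wrap_from_Min[of n s u x1] Cu is_IA_rotate[OF assms(1)]
    by (simp add: u_def x1_def)
  moreover have "strict_mono (\<lambda>m. x1 + incr_sum u m)"
    using incr_sum_strict_mono by (simp add: strict_mono_def)
  ultimately have xs: "xs = map (\<lambda>m. x1 + incr_sum u m) [0..<s]"
    unfolding xs_def by (simp add: sorted_list_of_set_image_strict_mono)
  show ?thesis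
  proof (intro exI[of _ u] conjI ballI)
    fix i assume i: "i \<in> {2..s}"
    then have "i - 1 < s" by auto
    then have "xs ! (i - 1) = x1 + incr_sum u (i - 1)" "xs ! 0 = x1"
      by (simp_all add: xs)
    then show "int (xs ! (i - 1)) \<in>
              {int (xs ! 0) + (\<Sum>k<i - 1. int (u ! k)) + int i - 1,
               int (xs ! 0) + (\<Sum>k<i - 1. int (u ! k)) + int i - 1 - int n}"
      using i by (simp add: int_incr_sum of_nat_diff)
  qed (use assms(1) k s xs Cu in \<open>simp_all add: u_def is_IA_rotate ia_equiv_rotate\<close>)
qed

end
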